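(* Let $H$ be a finite simple graph with $n=|V(H)|$ vertices, let the vertex set of $H$ be partitioned into anticliques, and let $m'_A$ denote the number of non-edges of $H$ lying inside these anticliques (i.e. pairs of distinct vertices belonging to the same anticlique of the partition). If $m'$ is the number of all non-edges of $H$, then $$n + m'_A \leq \rho(H) \leq n+m'.$$
   Context: All graphs are finite and simple. A coloring means a proper vertex coloring; an induced subgraph is rainbow if all its vertices have pairwise different colors. For a graph $H$, $\rho(H)$ is the least number $m$ such that there exists a graph $G$ on $m$ vertices such that every proper vertex coloring of $G$ contains a rainbow induced subgraph isomorphic to $H$. An anticlique is a set of pairwise non-adjacent vertices; a non-edge is an unordered pair of distinct non-adjacent vertices. *)

theory Defs
  imports Main "HOL-Library.Disjoint_Sets"
begin

definition simple_graph :: "'a set \<Rightarrow> ('a \<Rightarrow> 'a \<Rightarrow> bool) \<Rightarrow> bool" where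
  "simple_graph V E \<longleftrightarrow> finite V \<and> (\<forall>x y. E x y \<longrightarrow> x \<in> V \<and> y \<in> V)
     \<and> (\<forall>x y. E x y \<longrightarrow> E y x) \<and> (\<forall>x. \<not> E x x)"

definition proper_coloring :: "'b set \<Rightarrow> ('b \<Rightarrow> 'b \<Rightarrow> bool) \<Rightarrow> ('b \<Rightarrow> nat) \<Rightarrow> bool" where
  "proper_coloring W F c \<longleftrightarrow> (\<forall>u\<in>W. \<forall>v\<in>W. F u v \<longrightarrow> c u \<noteq> c v)"

definition induced_embedding ::
  "'a set \<Rightarrow> ('a \<Rightarrow> 'a \<Rightarrow> bool) \<Rightarrow> 'b set \<Rightarrow> ('b \<Rightarrow> 'b \<Rightarrow> bool) \<Rightarrow> ('a \<Rightarrow> 'b) \<Rightarrow> bool" where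
  "induced_embedding V E W F f \<longleftrightarrow> f ` V \<subseteq> W \<and> inj_on f V
     \<and> (\<forall>x\<in>V. \<forall>y\<in>V. E x y \<longleftrightarrow> F (f x) (f y))"

definition forces_rainbow ::
  "'a set \<Rightarrow> ('a \<Rightarrow> 'a \<Rightarrow> bool) \<Rightarrow> 'b set \<Rightarrow> ('b \<Rightarrow> 'b \<Rightarrow> bool) \<Rightarrow> bool" where
  "forces_rainbow V E W F \<longleftrightarrow>
     (\<forall>c. proper_coloring W F c \<longrightarrow>
        (\<exists>f. induced_embedding V E W F f \<and> inj_on (c \<circ> f) V))"

text \<open>rho(H): least m such that some simple graph on m vertices forces a rainbow
induced copy of H. Graphs on m vertices are taken w.l.o.g. on vertex set {0..<m}.\<close>
definition rho :: "'a set \<Rightarrow> ('a \<Rightarrow> 'a \<Rightarrow> bool) \<Rightarrow> nat" where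
  "rho V E = (LEAST m. \<exists>F :: nat \<Rightarrow> nat \<Rightarrow> bool.
      simple_graph {0..<m} F \<and> forces_rainbow V E {0..<m} F)"

definition non_edges :: "'a set \<Rightarrow> ('a \<Rightarrow> 'a \<Rightarrow> bool) \<Rightarrow> 'a set set" where
  "non_edges V E = {{x, y} | x y. x \<in> V \<and> y \<in> V \<and> x \<noteq> y \<and> \<not> E x y}"

definition block_pairs :: "'a set set \<Rightarrow> 'a set set" where
  "block_pairs P = {{x, y} | x y. x \<noteq> y \<and> (\<exists>B\<in>P. x \<in> B \<and> y \<in> B)}"

definition anticlique :: "('a \<Rightarrow> 'a \<Rightarrow> bool) \<Rightarrow> 'a set \<Rightarrow> bool" where
  "anticlique E B \<longleftrightarrow> (\<forall>x\<in>B. \<forall>y\<in>B. \<not> E x y)"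

end

theory Submission
  imports Defs
begin

text \<open>
  Upper bound: order the vertices of \<open>H\<close> and replace each vertex \<open>v\<close> by a clique of size
  \<open>1 + d(v)\<close>, where \<open>d(v)\<close> counts the non-neighbours of \<open>v\<close> that precede it, joining the
  cliques of adjacent vertices completely. In any colouring, pick one vertex from each clique
  greedily: the clique of \<open>v\<close> shows \<open>d(v) + 1\<close> colours, earlier neighbours cannot share any of
  them, and earlier non-neighbours have used at most \<open>d(v)\<close>. The \<open>d(v)\<close> sum to the number of
  non-edges.

  Lower bound: colour a forcing graph so that colour class \<open>i\<close> is a maximum anticlique among
  the vertices of colour \<open>\<ge> i\<close>. In a rainbow copy of \<open>H\<close> with colours \<open>\<phi>\<close>, the vertices \<open>y\<close> in
  the block of \<open>x\<close> with \<open>\<phi> y \<ge> \<phi> x\<close> form such an anticlique, so there are at most as many as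
  vertices of colour \<open>\<phi> x\<close>. Summing over \<open>x\<close> counts each vertex and each pair inside a block
  once, while the colours \<open>\<phi> x\<close> are distinct.
\<close>

lemma forces_rainbow_transfer:
  assumes h: "bij_betw h W' W"
    and edges: "\<And>a b. a \<in> W' \<Longrightarrow> b \<in> W' \<Longrightarrow> F' a b \<longleftrightarrow> F (h a) (h b)"
    and forces: "forces_rainbow V E W F"
  shows "forces_rainbow V E W' F'"
  unfolding forces_rainbow_def
proof (intro allI impI)
  fix c' assume proper': "proper_coloring W' F' c'"
  define h' where "h' = inv_into W' h"
  have h': "bij_betw h' W W'"
    unfolding h'_def using h by (rule bij_betw_inv_into)
  have h_h': "h (h' w) = w" if "w \<in> W" for w
    unfolding h'_def using h that by (simp add: bij_betw_inv_into_right)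
  have "proper_coloring W F (c' \<circ> h')"
    unfolding proper_coloring_def
  proof (intro ballI impI)
    fix u v assume uv: "u \<in> W" "v \<in> W" "F u v"
    moreover have "h' u \<in> W'" "h' v \<in> W'"
      using uv h' bij_betwE by blast+
    ultimately have "F' (h' u) (h' v)"
      using edges h_h' by simp
    with \<open>h' u \<in> W'\<close> \<open>h' v \<in> W'\<close> show "(c' \<circ> h') u \<noteq> (c' \<circ> h') v"
      using proper' unfolding proper_coloring_def by simp
  qed
  then obtain f where emb: "induced_embedding V E W F f" and rainbow: "inj_on (c' \<circ> h' \<circ> f) V"
    using forces unfolding forces_rainbow_def by blast
  have fV: "f ` V \<subseteq> W" and inj_f: "inj_on f V"
    and induced: "\<forall>x\<in>V. \<forall>y\<in>V. E x y \<longleftrightarrow> F (f x) (f y)"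
    using emb unfolding induced_embedding_def by auto
  have "induced_embedding V E W' F' (h' \<circ> f)"
    unfolding induced_embedding_def
  proof (intro conjI)
    show "(h' \<circ> f) ` V \<subseteq> W'"
      using fV h' bij_betwE by fastforce
    show "inj_on (h' \<circ> f) V"
      using inj_f inj_on_subset[OF bij_betw_imp_inj_on[OF h'] fV] by (rule comp_inj_on)
    show "\<forall>x\<in>V. \<forall>y\<in>V. E x y \<longleftrightarrow> F' ((h' \<circ> f) x) ((h' \<circ> f) y)"
    proof (intro ballI)
      fix x y assume "x \<in> V" "y \<in> V"
      then have "f x \<in> W" "f y \<in> W" "h' (f x) \<in> W'" "h' (f y) \<in> W'"
        using fV h' bij_betwE by blast+
      then show "E x y \<longleftrightarrow> F' ((h' \<circ> f) x) ((h' \<circ> f) y)"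
        using induced \<open>x \<in> V\<close> \<open>y \<in> V\<close> edges h_h' by simp
    qed
  qed
  then show "\<exists>f. induced_embedding V E W' F' f \<and> inj_on (c' \<circ> f) V"
    using rainbow by (metis comp_assoc)
qed

lemma forcing_graph_on_initial_segment:
  assumes "simple_graph W F" and "forces_rainbow V E W F"
  shows "\<exists>F'::nat \<Rightarrow> nat \<Rightarrow> bool.
           simple_graph {0..<card W} F' \<and> forces_rainbow V E {0..<card W} F'"
proof -
  have "finite W"
    using assms(1) unfolding simple_graph_def by blast
  then obtain h where h: "bij_betw h {0..<card W} W"
    using ex_bij_betw_nat_finite by blast
  define F' where "F' a b \<longleftrightarrow> a < card W \<and> b < card W \<and> F (h a) (h b)" for a b
  have "simple_graph {0..<card W} F'"
    using assms(1) unfolding simple_graph_def F'_def by auto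
  moreover have "forces_rainbow V E {0..<card W} F'"
    by (rule forces_rainbow_transfer[OF h _ assms(2)]) (simp add: F'_def)
  ultimately show ?thesis by blast
qed

lemma rho_le_card:
  assumes "simple_graph W F" and "forces_rainbow V E W F"
  shows "rho V E \<le> card W"
  unfolding rho_def by (rule Least_le) (rule forcing_graph_on_initial_segment[OF assms])

lemma rho_attained:
  assumes "simple_graph W F" and "forces_rainbow V E W F"
  shows "\<exists>F'::nat \<Rightarrow> nat \<Rightarrow> bool.
           simple_graph {0..<rho V E} F' \<and> forces_rainbow V E {0..<rho V E} F'"
  unfolding rho_def by (rule LeastI_ex) (use forcing_graph_on_initial_segment[OF assms] in blast)

lemma greedy_distinct_representatives:
  fixes g :: "'a \<Rightarrow> 'b::linorder" and A :: "'a \<Rightarrow> 'c set"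
  assumes "finite V" and "inj_on g V"
    and "\<And>v. v \<in> V \<Longrightarrow> card {u\<in>V. g u < g v \<and> A u \<inter> A v \<noteq> {}} < card (A v)"
  shows "\<exists>\<sigma>. (\<forall>v\<in>V. \<sigma> v \<in> A v) \<and> inj_on \<sigma> V"
  using assms
proof (induction V rule: finite_ranking_induct[where f = g])
  case empty
  show ?case by simp
next
  case (insert x U)
  show ?case
  proof (cases "x \<in> U")
    case True
    then show ?thesis using insert.IH insert.prems by (simp add: insert_absorb)
  next
    case False
    have earlier: "g u < g x" if "u \<in> U" for u
    proof -
      have "g u \<noteq> g x"
        using insert.prems(1) that False by (metis insertCI inj_on_eq_iff)
      then show ?thesis using insert.hyps(2)[OF that] by simp
    qed
    have "card {u\<in>U. g u < g v \<and> A u \<inter> A v \<noteq> {}} < card (A v)" if "v \<in> U" for v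
    proof -
      have "card {u\<in>U. g u < g v \<and> A u \<inter> A v \<noteq> {}}
              \<le> card {u\<in>insert x U. g u < g v \<and> A u \<inter> A v \<noteq> {}}"
        using insert.hyps(1) by (intro card_mono) auto
      then show ?thesis using insert.prems(2)[of v] that by simp
    qed
    then obtain \<sigma> where \<sigma>: "\<forall>v\<in>U. \<sigma> v \<in> A v" "inj_on \<sigma> U"
      using insert.IH insert.prems(1) by (meson inj_on_insert)
    define N where "N = {u\<in>U. A u \<inter> A x \<noteq> {}}"
    have "card (\<sigma> ` N) < card (A x)"
    proof -
      have "N = {u\<in>insert x U. g u < g x \<and> A u \<inter> A x \<noteq> {}}"
        unfolding N_def using earlier by auto
      then have "card N < card (A x)"
        using insert.prems(2)[of x] by simp
      then show ?thesis
        using card_image_le[of N \<sigma>] insert.hyps(1) unfolding N_def by simp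
    qed
    moreover have "finite (\<sigma> ` N)"
      using insert.hyps(1) unfolding N_def by simp
    ultimately obtain a where a: "a \<in> A x" "a \<notin> \<sigma> ` N"
      by (meson card_mono not_le subsetI)
    have "a \<notin> \<sigma> ` U"
      using \<sigma>(1) a unfolding N_def by blast
    then have "inj_on (\<sigma>(x := a)) (insert x U)"
      using \<sigma>(2) False by (auto simp: inj_on_fun_updI)
    moreover have "\<forall>v\<in>insert x U. (\<sigma>(x := a)) v \<in> A v"
      using \<sigma>(1) a(1) by simp
    ultimately show ?thesis by blast
  qed
qed

definition blowup_vertices :: "'a set \<Rightarrow> ('a \<Rightarrow> nat) \<Rightarrow> ('a \<times> nat) set" where
  "blowup_vertices V m = Sigma V (\<lambda>v. {..m v})"

definition blowup_edges ::
  "'a set \<Rightarrow> ('a \<Rightarrow> nat) \<Rightarrow> ('a \<Rightarrow> 'a \<Rightarrow> bool) \<Rightarrow> 'a \<times> nat \<Rightarrow> 'a \<times> nat \<Rightarrow> bool" where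
  "blowup_edges V m E p q \<longleftrightarrow> p \<in> blowup_vertices V m \<and> q \<in> blowup_vertices V m
     \<and> (fst p = fst q \<and> snd p \<noteq> snd q \<or> E (fst p) (fst q))"

lemma simple_graph_blowup:
  assumes "simple_graph V E"
  shows "simple_graph (blowup_vertices V m) (blowup_edges V m E)"
  using assms unfolding simple_graph_def blowup_edges_def blowup_vertices_def by auto

lemma card_blowup_vertices:
  assumes "finite V"
  shows "card (blowup_vertices V m) = card V + (\<Sum>v\<in>V. m v)"
  using assms by (simp add: blowup_vertices_def sum_Suc)

lemma blowup_forces_rainbow:
  fixes g :: "'a \<Rightarrow> 'b::linorder"
  assumes "simple_graph V E" and "inj_on g V"
    and small: "\<And>v. v \<in> V \<Longrightarrow> card {u\<in>V. g u < g v \<and> \<not> E u v} \<le> m v"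
  shows "forces_rainbow V E (blowup_vertices V m) (blowup_edges V m E)"
  unfolding forces_rainbow_def
proof (intro allI impI)
  let ?W = "blowup_vertices V m" and ?F = "blowup_edges V m E"
  fix c assume proper: "proper_coloring ?W ?F c"
  have finite: "finite V" and irrefl: "\<And>x. \<not> E x x"
    using assms(1) unfolding simple_graph_def by auto
  define A where "A v = (\<lambda>i. c (v, i)) ` {..m v}" for v
  have card_A: "card (A v) = Suc (m v)" if "v \<in> V" for v
  proof -
    have "inj_on (\<lambda>i. c (v, i)) {..m v}"
      using proper that unfolding inj_on_def proper_coloring_def blowup_edges_def blowup_vertices_def
      by auto
    then show ?thesis unfolding A_def by (simp add: card_image)
  qed
  have colours_apart: "A u \<inter> A v = {}" if "u \<in> V" "v \<in> V" "E u v" for u v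
    using proper that unfolding A_def proper_coloring_def blowup_edges_def blowup_vertices_def
    by auto
  have "card {u\<in>V. g u < g v \<and> A u \<inter> A v \<noteq> {}} < card (A v)" if "v \<in> V" for v
  proof -
    have "card {u\<in>V. g u < g v \<and> A u \<inter> A v \<noteq> {}} \<le> card {u\<in>V. g u < g v \<and> \<not> E u v}"
      using finite colours_apart that by (intro card_mono) auto
    then show ?thesis using small[OF that] card_A[OF that] by simp
  qed
  then obtain \<sigma> where \<sigma>: "\<forall>v\<in>V. \<sigma> v \<in> A v" "inj_on \<sigma> V"
    using greedy_distinct_representatives[OF finite assms(2)] by blast
  then obtain k where k: "\<forall>v\<in>V. k v \<le> m v \<and> c (v, k v) = \<sigma> v"
    unfolding A_def using bchoice[of V "\<lambda>v i. i \<le> m v \<and> c (v, i) = \<sigma> v"] by fastforce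
  define f where "f v = (v, k v)" for v
  have "induced_embedding V E ?W ?F f"
    using k irrefl unfolding induced_embedding_def f_def blowup_edges_def blowup_vertices_def
    by (auto intro: inj_onI)
  moreover have "inj_on (c \<circ> f) V"
    using \<sigma>(2) k by (simp add: f_def inj_on_def)
  ultimately show "\<exists>f. induced_embedding V E ?W ?F f \<and> inj_on (c \<circ> f) V" by blast
qed

lemma sum_earlier_non_neighbours_le:
  fixes g :: "'a \<Rightarrow> 'b::linorder"
  assumes "finite V"
  shows "(\<Sum>v\<in>V. card {u\<in>V. g u < g v \<and> \<not> E u v}) \<le> card (non_edges V E)"
proof -
  let ?N = "\<lambda>v. {u\<in>V. g u < g v \<and> \<not> E u v}"
  have "(\<Sum>v\<in>V. card (?N v)) = card (Sigma V ?N)"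
    using assms by (simp add: card_SigmaI)
  also have "\<dots> \<le> card (non_edges V E)"
  proof (rule card_inj_on_le)
    show "inj_on (\<lambda>(v, u). {u, v}) (Sigma V ?N)"
      by (auto simp: inj_on_def doubleton_eq_iff)
    show "(\<lambda>(v, u). {u, v}) ` Sigma V ?N \<subseteq> non_edges V E"
      unfolding non_edges_def by auto
    show "finite (non_edges V E)"
      using assms by (rule finite_subset[rotated, OF finite_Pow_iff[THEN iffD2]])
        (auto simp: non_edges_def)
  qed
  finally show ?thesis .
qed

lemma small_forcing_graph_exists:
  fixes V :: "'a set"
  assumes "simple_graph V E"
  shows "\<exists>(W::('a \<times> nat) set) F. simple_graph W F \<and> forces_rainbow V E W F
           \<and> card W \<le> card V + card (non_edges V E)"
proof -
  have "finite V"
    using assms unfolding simple_graph_def by blast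
  then obtain g :: "'a \<Rightarrow> nat" where "inj_on g V"
    using ex_bij_betw_finite_nat bij_betw_imp_inj_on by blast
  define m where "m v = card {u\<in>V. g u < g v \<and> \<not> E u v}" for v
  have "simple_graph (blowup_vertices V m) (blowup_edges V m E)"
    using assms by (rule simple_graph_blowup)
  moreover have "forces_rainbow V E (blowup_vertices V m) (blowup_edges V m E)"
    using assms \<open>inj_on g V\<close> by (rule blowup_forces_rainbow) (simp add: m_def)
  moreover have "card (blowup_vertices V m) \<le> card V + card (non_edges V E)"
    using \<open>finite V\<close> sum_earlier_non_neighbours_le[OF \<open>finite V\<close>, of g E]
    by (simp add: card_blowup_vertices m_def)
  ultimately show ?thesis by blast
qed

definition greedy_anticlique_coloring :: "'b set \<Rightarrow> ('b \<Rightarrow> 'b \<Rightarrow> bool) \<Rightarrow> ('b \<Rightarrow> nat) \<Rightarrow> bool" where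
  "greedy_anticlique_coloring W F c \<longleftrightarrow> proper_coloring W F c \<and>
     (\<forall>i S. S \<subseteq> {w\<in>W. i \<le> c w} \<longrightarrow> anticlique F S \<longrightarrow> card S \<le> card {w\<in>W. c w = i})"

lemma maximum_anticlique_exists:
  assumes "finite W"
  shows "\<exists>I\<subseteq>W. anticlique F I \<and> (\<forall>S\<subseteq>W. anticlique F S \<longrightarrow> card S \<le> card I)"
proof -
  have "\<exists>I. (I \<subseteq> W \<and> anticlique F I) \<and> (\<forall>S. S \<subseteq> W \<and> anticlique F S \<longrightarrow> card S \<le> card I)"
  proof (rule ex_has_greatest_nat[where k = "{}" and b = "Suc (card W)"])
    show "{} \<subseteq> W \<and> anticlique F {}"
      by (simp add: anticlique_def)
    show "\<forall>S. S \<subseteq> W \<and> anticlique F S \<longrightarrow> card S < Suc (card W)"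
      using assms by (simp add: card_mono le_imp_less_Suc)
  qed
  then show ?thesis by blast
qed

lemma greedy_anticlique_coloring_exists:
  assumes "finite W" and "\<forall>x\<in>W. \<not> F x x"
  shows "\<exists>c. greedy_anticlique_coloring W F c"
  using assms
proof (induction "card W" arbitrary: W rule: less_induct)
  case less
  show ?case
  proof (cases "W = {}")
    case True
    then show ?thesis
      by (auto simp: greedy_anticlique_coloring_def proper_coloring_def)
  next
    case False
    obtain I where I: "I \<subseteq> W" "anticlique F I"
      and maximum: "\<And>S. S \<subseteq> W \<Longrightarrow> anticlique F S \<Longrightarrow> card S \<le> card I"
      using maximum_anticlique_exists[OF less.prems(1)] by blast
    obtain w where "w \<in> W" using False by blast
    then have "card {w} \<le> card I"
      using less.prems(2) by (intro maximum) (auto simp: anticlique_def)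
    then have "I \<noteq> {}" by auto
    then have "card (W - I) < card W"
      using less.prems(1) I(1) by (intro psubset_card_mono) auto
    then obtain c' where c': "greedy_anticlique_coloring (W - I) F c'"
      using less.hyps less.prems by (meson Diff_iff finite_Diff)
    define c where "c w = (if w \<in> I then 0 else Suc (c' w))" for w
    have "proper_coloring W F c"
      using c' I(2) unfolding greedy_anticlique_coloring_def proper_coloring_def anticlique_def c_def
      by auto
    moreover have "card S \<le> card {w\<in>W. c w = i}"
      if S: "S \<subseteq> {w\<in>W. i \<le> c w}" "anticlique F S" for S i
    proof (cases i)
      case 0
      then have "{w\<in>W. c w = i} = I"
        using I(1) by (auto simp: c_def)
      then show ?thesis
        using S maximum by auto
    next
      case (Suc j)
      then have "S \<subseteq> {w\<in>W - I. j \<le> c' w}" and "{w\<in>W - I. c' w = j} = {w\<in>W. c w = i}"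
        using S(1) by (auto simp: c_def split: if_splits)
      then show ?thesis
        using c' S(2) unfolding greedy_anticlique_coloring_def by metis
    qed
    ultimately show ?thesis
      unfolding greedy_anticlique_coloring_def by blast
  qed
qed

lemma card_block_pairs_le_sum:
  fixes \<phi> :: "'a \<Rightarrow> 'b::linorder"
  assumes "finite V" and "\<Union>P = V" and "inj_on \<phi> V"
  shows "card V + card (block_pairs P)
           \<le> (\<Sum>x\<in>V. card {y\<in>V. (\<exists>B\<in>P. x \<in> B \<and> y \<in> B) \<and> \<phi> x \<le> \<phi> y})"
proof -
  let ?same = "\<lambda>x y. \<exists>B\<in>P. x \<in> B \<and> y \<in> B"
  define Q where "Q = {(x, y). x \<in> V \<and> y \<in> V \<and> ?same x y \<and> \<phi> x < \<phi> y}"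
  have "Q \<subseteq> V \<times> V"
    unfolding Q_def by auto
  then have finite_Q: "finite Q"
    using assms(1) by (simp add: finite_subset)
  have "block_pairs P \<subseteq> (\<lambda>(x, y). {x, y}) ` Q"
  proof
    fix e assume "e \<in> block_pairs P"
    then obtain x y where e: "e = {x, y}" "x \<noteq> y" "?same x y"
      unfolding block_pairs_def by blast
    then have "x \<in> V" "y \<in> V" "\<phi> x \<noteq> \<phi> y"
      using assms(2,3) by (auto dest: inj_onD)
    then have "(x, y) \<in> Q \<or> (y, x) \<in> Q"
      using e(3) unfolding Q_def by (auto simp: neq_iff)
    then show "e \<in> (\<lambda>(x, y). {x, y}) ` Q"
      using e(1) by (auto simp: insert_commute)
  qed
  then have "card (block_pairs P) \<le> card Q"
    using finite_Q by (meson card_image_le card_mono finite_imageI order_trans)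
  moreover have "card V = card ((\<lambda>x. (x, x)) ` V)"
    by (simp add: card_image inj_on_def)
  moreover have "card ((\<lambda>x. (x, x)) ` V \<union> Q) = card ((\<lambda>x. (x, x)) ` V) + card Q"
    using assms(1) finite_Q by (intro card_Un_disjoint) (auto simp: Q_def)
  moreover have "(\<lambda>x. (x, x)) ` V \<union> Q \<subseteq> Sigma V (\<lambda>x. {y\<in>V. ?same x y \<and> \<phi> x \<le> \<phi> y})"
    using assms(2) unfolding Q_def by auto
  then have "card ((\<lambda>x. (x, x)) ` V \<union> Q) \<le> card (Sigma V (\<lambda>x. {y\<in>V. ?same x y \<and> \<phi> x \<le> \<phi> y}))"
    using assms(1) by (intro card_mono) auto
  ultimately show ?thesis
    using assms(1) by (simp add: card_SigmaI)
qed

lemma forcing_graph_card_ge: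
  assumes "finite V" and "partition_on V P" and "\<forall>B\<in>P. anticlique E B"
    and "finite W" and "\<forall>x\<in>W. \<not> F x x" and "forces_rainbow V E W F"
  shows "card V + card (block_pairs P) \<le> card W"
proof -
  obtain c where c: "greedy_anticlique_coloring W F c"
    using greedy_anticlique_coloring_exists[of W F] assms(4,5) by blast
  then obtain f where emb: "induced_embedding V E W F f" and rainbow: "inj_on (c \<circ> f) V"
    using assms(6) unfolding forces_rainbow_def greedy_anticlique_coloring_def by blast
  have fV: "f ` V \<subseteq> W" and inj_f: "inj_on f V"
    and induced: "\<forall>x\<in>V. \<forall>y\<in>V. E x y \<longleftrightarrow> F (f x) (f y)"
    using emb unfolding induced_embedding_def by auto
  define \<phi> where "\<phi> = c \<circ> f"
  define T where "T x = {y\<in>V. (\<exists>B\<in>P. x \<in> B \<and> y \<in> B) \<and> \<phi> x \<le> \<phi> y}" for x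
  have "card (T x) \<le> card {w\<in>W. c w = \<phi> x}" if "x \<in> V" for x
  proof -
    have "f ` T x \<subseteq> {w\<in>W. \<phi> x \<le> c w}"
      using fV unfolding T_def \<phi>_def by auto
    moreover have "\<not> F (f y) (f z)" if yz: "y \<in> T x" "z \<in> T x" for y z
    proof -
      obtain B B' where B: "B \<in> P" "x \<in> B" "y \<in> B" and B': "B' \<in> P" "x \<in> B'" "z \<in> B'"
        and "y \<in> V" "z \<in> V"
        using yz unfolding T_def by blast
      have "B = B'"
        using B B' partition_onD2[OF assms(2)] by (meson disjointD disjoint_iff)
      then have "\<not> E y z"
        using assms(3) B B' unfolding anticlique_def by blast
      then show ?thesis
        using induced \<open>y \<in> V\<close> \<open>z \<in> V\<close> by blast
    qed
    then have "anticlique F (f ` T x)"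
      unfolding anticlique_def by blast
    ultimately have "card (f ` T x) \<le> card {w\<in>W. c w = \<phi> x}"
      using c unfolding greedy_anticlique_coloring_def by blast
    moreover have "card (f ` T x) = card (T x)"
      using inj_f by (rule card_image[OF inj_on_subset]) (auto simp: T_def)
    ultimately show ?thesis by simp
  qed
  then have "(\<Sum>x\<in>V. card (T x)) \<le> (\<Sum>x\<in>V. card {w\<in>W. c w = \<phi> x})"
    by (rule sum_mono)
  also have "\<dots> = card (\<Union>x\<in>V. {w\<in>W. c w = \<phi> x})"
    using assms(1,4) rainbow unfolding \<phi>_def by (intro card_UN_disjoint[symmetric]) (auto simp: inj_on_def)
  also have "\<dots> \<le> card W"
    using assms(4) by (intro card_mono) auto
  finally show ?thesis
    using card_block_pairs_le_sum[OF assms(1) partition_onD1[OF assms(2), symmetric], of \<phi>] rainbow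
    unfolding T_def \<phi>_def by simp
qed

theorem corollary2p2:
  fixes V :: "'a set" and E :: "'a \<Rightarrow> 'a \<Rightarrow> bool" and P :: "'a set set"
  assumes "simple_graph V E"
    and "partition_on V P"
    and "\<forall>B\<in>P. anticlique E B"
  shows "card V + card (block_pairs P) \<le> rho V E
       \<and> rho V E \<le> card V + card (non_edges V E)"
proof -
  obtain W :: "('a \<times> nat) set" and F where W: "simple_graph W F" "forces_rainbow V E W F"
    and card_W: "card W \<le> card V + card (non_edges V E)"
    using small_forcing_graph_exists[OF assms(1)] by blast
  obtain F0 :: "nat \<Rightarrow> nat \<Rightarrow> bool" where F0: "simple_graph {0..<rho V E} F0"
    "forces_rainbow V E {0..<rho V E} F0"
    using rho_attained[OF W] by blast
  have "finite V"
    using assms(1) unfolding simple_graph_def by blast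
  moreover have "\<forall>x\<in>{0..<rho V E}. \<not> F0 x x"
    using F0(1) unfolding simple_graph_def by blast
  ultimately have "card V + card (block_pairs P) \<le> card {0..<rho V E}"
    using assms(2,3) F0(2) by (intro forcing_graph_card_ge) auto
  then show ?thesis
    using rho_le_card[OF W] card_W by simp
qed

end
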